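(* Suppose Assumptions 1–4 hold and $p$ is convex. Let $\mathbf{x}$ be a Cournot candidate and $\mathbf{x}^S$ a social optimum with $p(X)\neq p(X^S)$ (so $X<X^S$ and $p$ is differentiable at $X$), and let $c=|p'(X)|$. Define $$p^0(q)=\begin{cases}-c(q-X)+p(X), & 0\le q\le X,\\ \max\left\{0,\ \dfrac{p(X^S)-p(X)}{X^S-X}(q-X)+p(X)\right\}, & q>X.\end{cases}$$ Consider the modified model with inverse demand $p^0$ and the same cost functions. Then $\mathbf{x}^S$ is socially optimal in the modified model, and the efficiency $\gamma^0(\mathbf{x})$ of $\mathbf{x}$ in the modified model satisfies $\gamma^0(\mathbf{x})\le\gamma(\mathbf{x})$.
   Context: Cournot model: $N$ suppliers, inverse demand $p:[0,\infty)\to[0,\infty)$, supplier $n$ has cost $C_n:[0,\infty)\to[0,\infty)$ and chooses $x_n\ge0$; $X=\sum_n x_n$, $X^S=\sum_n x_n^S$. $\partial_\pm$ denote right/left derivatives; $C_n'(0)$ is the right derivative at $0$. Assumption 1: each $C_n$ is convex, continuous, nondecreasing on $[0,\infty)$, continuously differentiable on $(0,\infty)$, with $C_n(0)=0$. Assumption 2: $p$ is continuous, nonnegative, nonincreasing, $p(0)>0$; its right derivative at $0$ exists and at every $q>0$ its left and right derivatives exist. Assumption 3: there exists $R>0$ such that $p(R)\le\min_n C_n'(0)$. Assumption 4: $p(0)>\min_n C_n'(0)$. Social welfare of $\mathbf{x}\ge0$ under inverse demand $\tilde p$: $\int_0^X \tilde p(q)\,dq-\sum_{n=1}^N C_n(x_n)$;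 a social optimum maximizes it over nonnegative vectors. Efficiency of $\mathbf{x}$: its welfare divided by the optimal welfare (for the respective model). A nonnegative vector $\mathbf{x}$ is a Cournot candidate if for every $n$: $C_n'(x_n)\le p(X)+x_n\,\partial_-p(X)$ whenever $x_n>0$, and $C_n'(x_n)\ge p(X)+x_n\,\partial_+p(X)$. *)

theory Defs
  imports "HOL-Analysis.Analysis"
begin

definition rderiv :: "(real \<Rightarrow> real) \<Rightarrow> real \<Rightarrow> real" where
  "rderiv f x = (THE d. (f has_real_derivative d) (at x within {x..}))"

definition lderiv :: "(real \<Rightarrow> real) \<Rightarrow> real \<Rightarrow> real" where
  "lderiv f x = (THE d. (f has_real_derivative d) (at x within {..x}))"

text \<open>Suppliers are indexed by 0..N-1; production vectors are nat => real.\<close>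
definition nonneg_vec :: "nat \<Rightarrow> (nat \<Rightarrow> real) \<Rightarrow> bool" where
  "nonneg_vec N x \<longleftrightarrow> (\<forall>n<N. 0 \<le> x n)"

definition total :: "nat \<Rightarrow> (nat \<Rightarrow> real) \<Rightarrow> real" where
  "total N x = (\<Sum>n<N. x n)"

definition assm1 :: "nat \<Rightarrow> (nat \<Rightarrow> real \<Rightarrow> real) \<Rightarrow> bool" where
  "assm1 N C \<longleftrightarrow> (\<forall>n<N.
      convex_on {0..} (C n) \<and> continuous_on {0..} (C n) \<and> mono_on {0..} (C n) \<and>
      (\<forall>x>0. C n differentiable at x) \<and> continuous_on {0<..} (deriv (C n)) \<and>
      C n 0 = 0)"

definition assm2 :: "(real \<Rightarrow> real) \<Rightarrow> bool" where
  "assm2 p \<longleftrightarrow> continuous_on {0..} p \<and> (\<forall>q\<ge>0. 0 \<le> p q) \<and>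
      (\<forall>q r. 0 \<le> q \<longrightarrow> q \<le> r \<longrightarrow> p r \<le> p q) \<and> 0 < p 0 \<and>
      (\<exists>d. (p has_real_derivative d) (at 0 within {0..})) \<and>
      (\<forall>q>0. (\<exists>d. (p has_real_derivative d) (at q within {..q})) \<and>
              (\<exists>d. (p has_real_derivative d) (at q within {q..})))"

definition min_mc0 :: "nat \<Rightarrow> (nat \<Rightarrow> real \<Rightarrow> real) \<Rightarrow> real" where
  "min_mc0 N C = Min ((\<lambda>n. rderiv (C n) 0) ` {..<N})"

definition assm3 :: "nat \<Rightarrow> (nat \<Rightarrow> real \<Rightarrow> real) \<Rightarrow> (real \<Rightarrow> real) \<Rightarrow> bool" where
  "assm3 N C p \<longleftrightarrow> (\<exists>R>0. p R \<le> min_mc0 N C)"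

definition assm4 :: "nat \<Rightarrow> (nat \<Rightarrow> real \<Rightarrow> real) \<Rightarrow> (real \<Rightarrow> real) \<Rightarrow> bool" where
  "assm4 N C p \<longleftrightarrow> min_mc0 N C < p 0"

definition welfare :: "nat \<Rightarrow> (nat \<Rightarrow> real \<Rightarrow> real) \<Rightarrow> (real \<Rightarrow> real) \<Rightarrow> (nat \<Rightarrow> real) \<Rightarrow> real" where
  "welfare N C p x = integral {0..total N x} p - (\<Sum>n<N. C n (x n))"

definition social_optimum :: "nat \<Rightarrow> (nat \<Rightarrow> real \<Rightarrow> real) \<Rightarrow> (real \<Rightarrow> real) \<Rightarrow> (nat \<Rightarrow> real) \<Rightarrow> bool" where
  "social_optimum N C p x \<longleftrightarrow> nonneg_vec N x \<and>
      (\<forall>y. nonneg_vec N y \<longrightarrow> welfare N C p y \<le> welfare N C p x)"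

definition opt_welfare :: "nat \<Rightarrow> (nat \<Rightarrow> real \<Rightarrow> real) \<Rightarrow> (real \<Rightarrow> real) \<Rightarrow> real" where
  "opt_welfare N C p = (SUP y\<in>{y. nonneg_vec N y}. welfare N C p y)"

definition efficiency :: "nat \<Rightarrow> (nat \<Rightarrow> real \<Rightarrow> real) \<Rightarrow> (real \<Rightarrow> real) \<Rightarrow> (nat \<Rightarrow> real) \<Rightarrow> real" where
  "efficiency N C p x = welfare N C p x / opt_welfare N C p"

text \<open>Cournot candidate; C_n'(x_n) is the right derivative (= derivative for x_n > 0).\<close>
definition cournot_candidate :: "nat \<Rightarrow> (nat \<Rightarrow> real \<Rightarrow> real) \<Rightarrow> (real \<Rightarrow> real) \<Rightarrow> (nat \<Rightarrow> real) \<Rightarrow> bool" where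
  "cournot_candidate N C p x \<longleftrightarrow> nonneg_vec N x \<and>
     (\<forall>n<N. (0 < x n \<longrightarrow> rderiv (C n) (x n) \<le> p (total N x) + x n * lderiv p (total N x)) \<and>
            p (total N x) + x n * rderiv p (total N x) \<le> rderiv (C n) (x n))"

definition p_mod :: "(real \<Rightarrow> real) \<Rightarrow> real \<Rightarrow> real \<Rightarrow> real \<Rightarrow> real" where
  "p_mod p X XS q =
     (let c = \<bar>deriv p X\<bar> in
      if q \<le> X then - c * (q - X) + p X
      else max 0 ((p XS - p X) / (XS - X) * (q - X) + p X))"

end

theory Submission
  imports Defs
begin

(*
  The proof rests on two economic facts.  (i) Optimality of x^S means that the price
  P^S = p(X^S) supports every cost function at x^S_n, i.e. P^S (t - x^S_n) <= C_n t - C_n x^S_n;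
  conversely, any continuous demand lying above P^S left of X^S and below P^S right of X^S
  makes x^S optimal.  (ii) At a Cournot candidate with X > 0 the one-sided derivatives of the
  convex p at X must coincide, so p is differentiable there with p'(X) <= 0, marginal costs
  are at most p(X), X < X^S, and the welfare of x is nonnegative.
  Since p^0 is the tangent of p at X left of X and the chord of p right of X, we have
  p^0 <= p on [0,X], p <= p^0 on [X,X^S], and p^0 satisfies the hypotheses of (i).
  Passing to p^0 lowers the welfare of x by A = int_0^X (p - p^0) and changes the optimal
  welfare by B - A with B = int_X^{X^S} (p^0 - p) >= 0, which decreases the ratio.
*)

lemma at_within_atMost_eq: "at (x::real) within {..x} = at_left x"
  unfolding at_within_def by (rule arg_cong[where f="\<lambda>S. inf (nhds x) (principal S)"]) auto

lemma at_within_atLeast_eq: "at (x::real) within {x..} = at_right x"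
  unfolding at_within_def by (rule arg_cong[where f="\<lambda>S. inf (nhds x) (principal S)"]) auto

lemma rderiv_eq: "(f has_real_derivative d) (at x within {x..}) \<Longrightarrow> rderiv f x = d"
  unfolding rderiv_def
  by (rule the_equality) (auto intro: has_field_derivative_unique simp: at_within_atLeast_eq)

lemma lderiv_eq: "(f has_real_derivative d) (at x within {..x}) \<Longrightarrow> lderiv f x = d"
  unfolding lderiv_def
  by (rule the_equality) (auto intro: has_field_derivative_unique simp: at_within_atMost_eq)

lemma has_real_derivative_rderiv:
  assumes "f differentiable at z"
  shows "(f has_real_derivative rderiv f z) (at z)"
proof -
  have der: "(f has_real_derivative deriv f z) (at z)"
    using assms by (simp add: DERIV_deriv_iff_real_differentiable)
  then have "rderiv f z = deriv f z"
    by (rule rderiv_eq[OF has_field_derivative_at_within])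
  with der show ?thesis by simp
qed

lemma derivative_nonpos_if_antimono:
  fixes f :: "real \<Rightarrow> real"
  assumes der: "(f has_real_derivative d) (at x)" and x: "0 \<le> x"
    and antimono: "\<And>q r. 0 \<le> q \<Longrightarrow> q \<le> r \<Longrightarrow> f r \<le> f q"
  shows "d \<le> 0"
proof (rule ccontr)
  assume "\<not> d \<le> 0"
  then obtain \<delta> where "\<delta> > 0" and inc: "\<And>h. 0 < h \<Longrightarrow> h < \<delta> \<Longrightarrow> f x < f (x + h)"
    using DERIV_pos_inc_right[OF der] by force
  then have "f x < f (x + \<delta> / 2)" by simp
  moreover have "f (x + \<delta> / 2) \<le> f x" using antimono x \<open>\<delta> > 0\<close> by simp
  ultimately show False by simp
qed

section \<open>Convex functions of one variable\<close>

lemma convex_secant_slope_mono: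
  fixes f :: "real \<Rightarrow> real"
  assumes f: "convex_on I f" and I: "a \<in> I" "y \<in> I" "z \<in> I"
    and yz: "y < z" "y \<noteq> a" "z \<noteq> a"
  shows "(f y - f a) / (y - a) \<le> (f z - f a) / (z - a)"
proof -
  have swap: "(f u - f v) / (u - v) = (f v - f u) / (v - u)" for u v :: real
    by (metis minus_diff_eq minus_divide_divide)
  consider "z < a" | "y < a" "a < z" | "a < y" using yz by linarith
  then show ?thesis
  proof cases
    case 1
    then show ?thesis using convex_on_slope_le(2)[OF f I(2,1), of z] yz by (simp add: swap)
  next
    case 2
    then show ?thesis using convex_on_slope_le[OF f I(2,3), of a] by (simp add: swap)
  next
    case 3
    then show ?thesis using convex_on_slope_le(1)[OF f I(1,3), of y] yz by (simp add: swap)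
  qed
qed

lemma convex_chord_bound:
  fixes c :: "real \<Rightarrow> real"
  assumes cvx: "convex_on {0..} c" and st: "0 \<le> s" "0 \<le> t"
    and u: "min s t \<le> u" "u \<le> max s t"
  shows "c u - c s \<le> (u - s) * ((c t - c s) / (t - s))"
proof (cases s t rule: linorder_cases)
  case less
  have "convex_on {s..t} c" by (rule convex_on_subset[OF cvx]) (use st in auto)
  from convex_onD_Icc'[OF this, of u] show ?thesis using less u by (simp add: mult.commute)
next
  case greater
  have "convex_on {t..s} c" by (rule convex_on_subset[OF cvx]) (use st in auto)
  from convex_onD_Icc''[OF this, of u] have "c u \<le> (c t - c s) / (s - t) * (s - u) + c s"
    using greater u by simp
  moreover have "(c t - c s) / (s - t) * (s - u) = (u - s) * ((c t - c s) / (t - s))"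
    using greater by (simp add: field_simps)
  ultimately show ?thesis by simp
qed (use u in simp)

text \<open>If the left derivative of a convex function at an interior point is at least its right
  derivative, the two agree (the reverse inequality always holds) and the function is
  differentiable there.\<close>

lemma convex_differentiable_if_left_ge_right:
  fixes f :: "real \<Rightarrow> real"
  assumes cvx: "convex_on {0..} f" and x: "0 < x"
    and dl: "(f has_real_derivative dl) (at x within {..x})"
    and dr: "(f has_real_derivative dr) (at x within {x..})"
    and dr_le_dl: "dr \<le> dl"
  shows "(f has_real_derivative dl) (at x)"
proof -
  define g where "g y = (f y - f x) / (y - x)" for y
  have gl: "(g \<longlongrightarrow> dl) (at_left x)"
    using dl unfolding has_field_derivative_iff at_within_atMost_eq g_def .
  have gr: "(g \<longlongrightarrow> dr) (at_right x)"
    using dr unfolding has_field_derivative_iff at_within_atLeast_eq g_def .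
  have dl_le_g: "dl \<le> g z" if "x < z" for z
  proof (rule tendsto_upperbound[OF gl])
    show "\<forall>\<^sub>F y in at_left x. g y \<le> g z"
      using x that unfolding g_def
      by (subst eventually_at_left[of 0]) (auto intro!: exI[of _ 0] convex_secant_slope_mono[OF cvx])
  qed simp
  have "dl \<le> dr"
    by (rule tendsto_lowerbound[OF gr]) (auto intro: dl_le_g eventually_mono[OF eventually_at_right_less])
  with dr_le_dl have "(g \<longlongrightarrow> dl) (at x within ({..x} \<union> {x..}))"
    unfolding at_within_union at_within_atMost_eq at_within_atLeast_eq
    using gl gr by (auto intro: filterlim_sup)
  moreover have "{..x} \<union> {x..} = UNIV" by auto
  ultimately show ?thesis unfolding has_field_derivative_iff g_def by simp
qed

lemma integrable_on_nonneg_interval: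
  fixes p :: "real \<Rightarrow> real"
  assumes "continuous_on {0..} p" "0 \<le> a"
  shows "p integrable_on {a..b}"
  by (rule integrable_continuous_real, rule continuous_on_subset[OF assms(1)]) (use assms(2) in auto)

lemma integral_near_point_bounds:
  fixes p :: "real \<Rightarrow> real"
  assumes pc: "continuous_on {0..} p" and s: "0 \<le> s" and e: "0 < e"
  obtains d where "0 < d"
    and "\<And>a b. 0 \<le> a \<Longrightarrow> a \<le> s \<Longrightarrow> s \<le> b \<Longrightarrow> b - a < d \<Longrightarrow>
           (b - a) * (p s - e) \<le> integral {a..b} p \<and> integral {a..b} p \<le> (b - a) * (p s + e)"
proof -
  obtain d where d: "0 < d" "\<And>u. u \<in> {0..} \<Longrightarrow> dist u s < d \<Longrightarrow> dist (p u) (p s) < e"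
    using pc s e unfolding continuous_on_iff by (metis atLeast_iff)
  have "(b - a) * (p s - e) \<le> integral {a..b} p \<and> integral {a..b} p \<le> (b - a) * (p s + e)"
    if ab: "0 \<le> a" "a \<le> s" "s \<le> b" "b - a < d" for a b
  proof -
    have close: "\<bar>p u - p s\<bar> < e" if "u \<in> {a..b}" for u
      using d(2)[of u] ab that by (auto simp: dist_real_def)
    have "integral {a..b} (\<lambda>_. p s - e) \<le> integral {a..b} p"
      using close by (intro integral_le integrable_on_nonneg_interval[OF pc ab(1)]) force+
    moreover have "integral {a..b} p \<le> integral {a..b} (\<lambda>_. p s + e)"
      using close by (intro integral_le integrable_on_nonneg_interval[OF pc ab(1)]) force+
    ultimately show ?thesis using ab by simp
  qed
  with d(1) show ?thesis using that by blast
qed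

text \<open>If changing one supplier's output from \<open>s\<close> to any \<open>t \<ge> 0\<close> (which moves total output from
  \<open>S\<close> to \<open>S - s + t\<close>) never raises welfare, then the price \<open>p S\<close> supports the convex cost \<open>c\<close>
  at \<open>s\<close>: it lies between the left and right derivatives of \<open>c\<close> at \<open>s\<close>.\<close>

lemma optimal_output_supporting_price:
  fixes c p :: "real \<Rightarrow> real"
  assumes cvx: "convex_on {0..} c" and pc: "continuous_on {0..} p"
    and s: "0 \<le> s" "s \<le> S"
    and opt: "\<And>t. 0 \<le> t \<Longrightarrow> integral {0..S - s + t} p - c t \<le> integral {0..S} p - c s"
    and t: "0 \<le> t"
  shows "p S * (t - s) \<le> c t - c s"
proof -
  define k where "k = (c t - c s) / (t - s)"
  define F where "F u = integral {0..u} p" for u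
  have split: "F a + integral {a..b} p = F b" if "0 \<le> a" "a \<le> b" for a b
    unfolding F_def using that
    by (intro Henstock_Kurzweil_Integration.integral_combine integrable_on_nonneg_interval[OF pc]) auto
  have increment: "F (S + (u - s)) - F S \<le> (u - s) * k"
    if u: "min s t \<le> u" "u \<le> max s t" for u
  proof -
    have "0 \<le> u" using u s t by linarith
    then have "F (S + (u - s)) - F S \<le> c u - c s"
      using opt[of u] unfolding F_def by (simp add: algebra_simps)
    also have "\<dots> \<le> (u - s) * k" using convex_chord_bound[OF cvx s(1) t u] unfolding k_def .
    finally show ?thesis .
  qed
  have S: "0 \<le> S" using s by simp
  consider "s < t" | "t < s" | "t = s" by linarith
  then show ?thesis
  proof cases
    case 1
    have "p S \<le> k + e" if e: "0 < e" for e
    proof -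
      obtain d where d: "0 < d" and bounds: "\<And>a b. 0 \<le> a \<Longrightarrow> a \<le> S \<Longrightarrow> S \<le> b \<Longrightarrow> b - a < d \<Longrightarrow>
          (b - a) * (p S - e) \<le> integral {a..b} p \<and> integral {a..b} p \<le> (b - a) * (p S + e)"
        using integral_near_point_bounds[OF pc S e] by blast
      define h where "h = min (d / 2) (t - s)"
      have h: "0 < h" "h \<le> t - s" "h < d" using d 1 unfolding h_def by auto
      have "h * (p S - e) \<le> integral {S..S + h} p" using bounds[of S "S + h"] S h by simp
      also have "\<dots> = F (S + h) - F S" using split[of S "S + h"] S h by simp
      also have "\<dots> \<le> h * k" using increment[of "s + h"] h 1 by simp
      finally show ?thesis using h(1) by (simp add: mult_le_cancel_left_pos)
    qed
    then have "p S \<le> k" by (rule field_le_epsilon)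
    then show ?thesis using 1 unfolding k_def by (simp add: field_simps)
  next
    case 2
    have "k \<le> p S + e" if e: "0 < e" for e
    proof -
      obtain d where d: "0 < d" and bounds: "\<And>a b. 0 \<le> a \<Longrightarrow> a \<le> S \<Longrightarrow> S \<le> b \<Longrightarrow> b - a < d \<Longrightarrow>
          (b - a) * (p S - e) \<le> integral {a..b} p \<and> integral {a..b} p \<le> (b - a) * (p S + e)"
        using integral_near_point_bounds[OF pc S e] by blast
      define h where "h = min (d / 2) (s - t)"
      have h: "0 < h" "h \<le> s - t" "h < d" using d 2 unfolding h_def by auto
      have "h * k \<le> F S - F (S - h)" using increment[of "s - h"] h 2 by simp
      also have "\<dots> = integral {S - h..S} p" using split[of "S - h" S] s t h by simp
      also have "\<dots> \<le> h * (p S + e)" using bounds[of "S - h" S] s t h by simp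
      finally show ?thesis using h(1) by (simp add: mult_le_cancel_left_pos)
    qed
    then have "k \<le> p S" by (rule field_le_epsilon)
    then show ?thesis using 2 unfolding k_def by (simp add: field_simps)
  qed simp
qed

lemma total_nonneg: "nonneg_vec N x \<Longrightarrow> 0 \<le> total N x"
  unfolding nonneg_vec_def total_def by (auto intro: sum_nonneg)

lemma le_total: "nonneg_vec N x \<Longrightarrow> n < N \<Longrightarrow> x n \<le> total N x"
  unfolding nonneg_vec_def total_def by (rule member_le_sum) auto

lemma sum_fun_upd_remove:
  fixes g :: "nat \<Rightarrow> real \<Rightarrow> real"
  assumes "n < N"
  shows "(\<Sum>i<N. g i ((x(n := t)) i)) = (\<Sum>i<N. g i (x i)) - g n (x n) + g n t"
proof -
  have "(\<Sum>i<N. g i ((x(n := t)) i)) = g n t + (\<Sum>i\<in>{..<N} - {n}. g i (x i))"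
    using assms by (subst sum.remove[of "{..<N}" n]) (auto intro!: sum.cong)
  also have "\<dots> = (\<Sum>i<N. g i (x i)) - g n (x n) + g n t"
    using assms by (simp add: sum.remove[of "{..<N}" n])
  finally show ?thesis .
qed

lemma total_fun_upd: "n < N \<Longrightarrow> total N (x(n := t)) = total N x - x n + t"
  using sum_fun_upd_remove[of n N "\<lambda>_ v. v" x t] unfolding total_def by simp

lemma welfare_zero_vec: "(\<And>n. n < N \<Longrightarrow> C n 0 = 0) \<Longrightarrow> welfare N C p (\<lambda>_. 0) = 0"
  by (simp add: welfare_def total_def)

section \<open>Social optima and supporting prices\<close>

lemma social_optimum_supporting_price:
  assumes C: "assm1 N C" and pc: "continuous_on {0..} p"
    and opt: "social_optimum N C p xS" and n: "n < N" and t: "0 \<le> t"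
  shows "p (total N xS) * (t - xS n) \<le> C n t - C n (xS n)"
proof (rule optimal_output_supporting_price[OF _ pc _ _ _ t])
  show "convex_on {0..} (C n)" using C n unfolding assm1_def by simp
  have xS: "nonneg_vec N xS" using opt unfolding social_optimum_def by simp
  show "0 \<le> xS n" "xS n \<le> total N xS" using xS n le_total unfolding nonneg_vec_def by auto
  fix t :: real assume "0 \<le> t"
  then have "nonneg_vec N (xS(n := t))" using xS unfolding nonneg_vec_def by auto
  then have "welfare N C p (xS(n := t)) \<le> welfare N C p xS"
    using opt unfolding social_optimum_def by simp
  then show "integral {0..total N xS - xS n + t} p - C n t \<le> integral {0..total N xS} p - C n (xS n)"
    unfolding welfare_def total_fun_upd[OF n] sum_fun_upd_remove[OF n] by simp
qed

lemma supporting_price_imp_social_optimum: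
  fixes p :: "real \<Rightarrow> real"
  assumes xS: "nonneg_vec N xS"
    and support: "\<And>n t. n < N \<Longrightarrow> 0 \<le> t \<Longrightarrow> P * (t - xS n) \<le> C n t - C n (xS n)"
    and pc: "continuous_on {0..} p"
    and below: "\<And>q. 0 \<le> q \<Longrightarrow> q \<le> total N xS \<Longrightarrow> P \<le> p q"
    and above: "\<And>q. total N xS \<le> q \<Longrightarrow> p q \<le> P"
  shows "social_optimum N C p xS"
  unfolding social_optimum_def
proof (intro conjI allI impI xS)
  fix y assume y: "nonneg_vec N y"
  define Y XS where "Y = total N y" and "XS = total N xS"
  have Y: "0 \<le> Y" and XS: "0 \<le> XS" unfolding Y_def XS_def using y xS by (auto intro: total_nonneg)
  have int: "\<And>a b. 0 \<le> a \<Longrightarrow> p integrable_on {a..b}" by (rule integrable_on_nonneg_interval[OF pc])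
  have "P * (Y - XS) = (\<Sum>n<N. P * (y n - xS n))"
    unfolding Y_def XS_def total_def by (simp add: sum_distrib_left right_diff_distrib sum_subtractf)
  also have "\<dots> \<le> (\<Sum>n<N. C n (y n) - C n (xS n))"
    using y support unfolding nonneg_vec_def by (intro sum_mono) auto
  finally have costs: "P * (Y - XS) \<le> (\<Sum>n<N. C n (y n)) - (\<Sum>n<N. C n (xS n))"
    by (simp add: sum_subtractf)
  have "integral {0..Y} p - integral {0..XS} p \<le> P * (Y - XS)"
  proof (cases "XS \<le> Y")
    case True
    have "integral {0..XS} p + integral {XS..Y} p = integral {0..Y} p"
      by (rule Henstock_Kurzweil_Integration.integral_combine) (use True XS int in auto)
    moreover have "integral {XS..Y} p \<le> integral {XS..Y} (\<lambda>_. P)"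
      by (rule integral_le) (use int XS above XS_def in auto)
    ultimately show ?thesis using True by (simp add: mult.commute)
  next
    case False
    have "integral {0..Y} p + integral {Y..XS} p = integral {0..XS} p"
      by (rule Henstock_Kurzweil_Integration.integral_combine) (use False Y int in auto)
    moreover have "integral {Y..XS} (\<lambda>_. P) \<le> integral {Y..XS} p"
      by (rule integral_le) (use int Y below XS_def in auto)
    ultimately show ?thesis using False by (simp add: algebra_simps)
  qed
  with costs show "welfare N C p y \<le> welfare N C p xS"
    unfolding welfare_def Y_def[symmetric] XS_def[symmetric] by linarith
qed

lemma social_optimum_opt_welfare:
  "social_optimum N C p xS \<Longrightarrow> opt_welfare N C p = welfare N C p xS"
  unfolding opt_welfare_def social_optimum_def by (rule cSup_eq_maximum) auto

section \<open>Cournot candidates\<close>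

lemma cournot_candidateD:
  assumes "cournot_candidate N C p x" "n < N"
  shows "0 \<le> x n"
    and "0 < x n \<Longrightarrow> rderiv (C n) (x n) \<le> p (total N x) + x n * lderiv p (total N x)"
    and "p (total N x) + x n * rderiv p (total N x) \<le> rderiv (C n) (x n)"
  using assms unfolding cournot_candidate_def nonneg_vec_def by auto

lemma cournot_total_pos:
  assumes N: "0 < N" and A4: "assm4 N C p" and cand: "cournot_candidate N C p x"
  shows "0 < total N x"
proof (rule ccontr)
  assume "\<not> 0 < total N x"
  then have X: "total N x = 0"
    using total_nonneg cand unfolding cournot_candidate_def by (meson antisym not_le)
  have "\<forall>n\<in>{..<N}. x n = 0"
    using X cournot_candidateD(1)[OF cand] sum_nonneg_eq_0_iff[of "{..<N}" x]
    unfolding total_def by auto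
  have "min_mc0 N C \<in> (\<lambda>n. rderiv (C n) 0) ` {..<N}"
    unfolding min_mc0_def by (rule Min_in) (use N in auto)
  then obtain n where n: "n < N" "rderiv (C n) 0 = min_mc0 N C" by auto
  have "p 0 \<le> rderiv (C n) 0"
    using cournot_candidateD(3)[OF cand n(1)] X \<open>\<forall>n\<in>{..<N}. x n = 0\<close> n(1) by simp
  then show False using A4 n(2) unfolding assm4_def by simp
qed

lemma active_supplier:
  assumes "0 < total N x"
  obtains n where "n < N" "0 < x n"
proof -
  have "\<not> (\<forall>n<N. x n \<le> 0)"
    using assms sum_nonpos[of "{..<N}" x] unfolding total_def by force
  then show ?thesis using that by (meson not_le)
qed

text \<open>At a Cournot candidate with positive output, a convex demand is differentiable:
  a supplier with positive output forces its right derivative to be at most its left one.\<close>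

lemma cournot_demand_differentiable:
  assumes A2: "assm2 p" and cvx: "convex_on {0..} p"
    and cand: "cournot_candidate N C p x" and X: "0 < total N x"
  shows "(p has_real_derivative lderiv p (total N x)) (at (total N x))"
proof -
  define X where "X = total N x"
  obtain m where m: "m < N" "0 < x m" using active_supplier[OF X] .
  obtain dl dr where dl: "(p has_real_derivative dl) (at X within {..X})"
    and dr: "(p has_real_derivative dr) (at X within {X..})"
    using A2 X unfolding assm2_def X_def by blast
  have "x m * dr \<le> x m * dl"
    using cournot_candidateD(2,3)[OF cand m(1), folded X_def] m(2)
    unfolding rderiv_eq[OF dr] lderiv_eq[OF dl] by linarith
  then have "dr \<le> dl" using m(2) by simp
  from convex_differentiable_if_left_ge_right[OF cvx _ dl dr this] show ?thesis
    using X lderiv_eq[OF dl] unfolding X_def by simp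
qed

lemma cost_tangent:
  assumes C: "assm1 N C" and n: "n < N" and z: "0 < z" and y: "0 \<le> y"
  shows "rderiv (C n) z * (y - z) \<le> C n y - C n z"
proof (rule convex_on_imp_above_tangent)
  show "convex_on {0..} (C n)" using C n unfolding assm1_def by simp
  show "(C n has_real_derivative rderiv (C n) z) (at z within {0..})"
    using C n z unfolding assm1_def
    by (intro has_field_derivative_at_within[OF has_real_derivative_rderiv]) simp
qed (use z y in \<open>auto simp: is_interval_connected\<close>)

lemma cournot_marginal_cost_le_price:
  assumes cand: "cournot_candidate N C p x" and slope: "lderiv p (total N x) \<le> 0"
    and n: "n < N" and xn: "0 < x n"
  shows "rderiv (C n) (x n) \<le> p (total N x)"
  using cournot_candidateD(2)[OF cand n xn] mult_nonneg_nonpos[of "x n", OF _ slope] xn by simp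

lemma cournot_cost_le_revenue:
  assumes C: "assm1 N C" and cand: "cournot_candidate N C p x"
    and slope: "lderiv p (total N x) \<le> 0" and n: "n < N"
  shows "C n (x n) \<le> x n * p (total N x)"
proof (cases "x n = 0")
  case True
  then show ?thesis using C n unfolding assm1_def by simp
next
  case False
  then have xn: "0 < x n" using cournot_candidateD(1)[OF cand n] by simp
  have "C n (x n) \<le> rderiv (C n) (x n) * x n"
    using cost_tangent[OF C n xn, of 0] C n unfolding assm1_def by simp
  also have "\<dots> \<le> p (total N x) * x n"
    using cournot_marginal_cost_le_price[OF cand slope n xn] xn by (simp add: mult_right_mono)
  finally show ?thesis by (simp add: mult.commute)
qed

text \<open>Consequently a Cournot candidate has nonnegative welfare: the consumers pay at least the
  price \<open>p X\<close> for every unit, which covers all costs.\<close>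

lemma cournot_welfare_nonneg:
  assumes C: "assm1 N C" and A2: "assm2 p" and cand: "cournot_candidate N C p x"
    and slope: "lderiv p (total N x) \<le> 0"
  shows "0 \<le> welfare N C p x"
proof -
  define X where "X = total N x"
  have x: "nonneg_vec N x" using cand unfolding cournot_candidate_def by simp
  have pc: "continuous_on {0..} p" and antimono: "\<And>q r. 0 \<le> q \<Longrightarrow> q \<le> r \<Longrightarrow> p r \<le> p q"
    using A2 unfolding assm2_def by auto
  have "(\<Sum>n<N. C n (x n)) \<le> (\<Sum>n<N. x n * p X)"
    using cournot_cost_le_revenue[OF C cand slope] unfolding X_def by (intro sum_mono) simp
  also have "\<dots> = integral {0..X} (\<lambda>_. p X)"
    using total_nonneg[OF x] unfolding X_def total_def by (simp add: sum_distrib_right)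
  also have "\<dots> \<le> integral {0..X} p"
    by (rule integral_le) (auto intro: antimono integrable_on_nonneg_interval[OF pc])
  finally show ?thesis unfolding welfare_def X_def by simp
qed

text \<open>If the prices at the Cournot candidate and at the social optimum differ, the candidate
  produces strictly less: otherwise some supplier produces more at \<open>x\<close> than at \<open>xS\<close>, and
  comparing its marginal cost with both prices forces \<open>p(XS) \<le> p(X) \<le> p(XS)\<close>.\<close>

lemma cournot_total_lt_optimum:
  assumes C: "assm1 N C" and A2: "assm2 p" and cand: "cournot_candidate N C p x"
    and opt: "social_optimum N C p xS" and slope: "lderiv p (total N x) \<le> 0"
    and prices: "p (total N x) \<noteq> p (total N xS)"
  shows "total N x < total N xS"
proof (rule ccontr)
  define X XS where "X = total N x" and "XS = total N xS"
  assume "\<not> total N x < total N xS"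
  then have XS_le: "XS \<le> X" unfolding X_def XS_def by simp
  have xS: "nonneg_vec N xS" using opt unfolding social_optimum_def by simp
  have pc: "continuous_on {0..} p" using A2 unfolding assm2_def by simp
  have "p X \<le> p XS"
    using A2 total_nonneg[OF xS] XS_le unfolding assm2_def XS_def by simp
  obtain n where n: "n < N" "xS n < x n"
  proof (rule ccontr)
    assume "\<not> thesis"
    then have "\<forall>n<N. x n \<le> xS n" using that by (meson not_less)
    then have "X \<le> XS" unfolding X_def XS_def total_def by (intro sum_mono) auto
    then show False using XS_le prices unfolding X_def XS_def by simp
  qed
  have xn: "0 < x n" using n xS unfolding nonneg_vec_def by (meson le_less_trans)
  have "p XS * (x n - xS n) \<le> C n (x n) - C n (xS n)"
    using social_optimum_supporting_price[OF C pc opt n(1)] xn unfolding XS_def by simp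
  also have "\<dots> \<le> rderiv (C n) (x n) * (x n - xS n)"
    using cost_tangent[OF C n(1) xn, of "xS n"] xS n(1) unfolding nonneg_vec_def
    by (auto simp: algebra_simps)
  also have "\<dots> \<le> p X * (x n - xS n)"
    using cournot_marginal_cost_le_price[OF cand slope n(1) xn] n(2) unfolding X_def
    by (simp add: mult_right_mono)
  finally have "p XS \<le> p X" using n(2) by simp
  with \<open>p X \<le> p XS\<close> prices show False unfolding X_def XS_def by simp
qed

section \<open>The modified demand\<close>

lemma p_mod_left: "q \<le> X \<Longrightarrow> p_mod p X XS q = p X - \<bar>deriv p X\<bar> * (q - X)"
  by (simp add: p_mod_def)

lemma p_mod_right:
  "X < q \<Longrightarrow> p_mod p X XS q = max 0 ((p XS - p X) / (XS - X) * (q - X) + p X)"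
  by (simp add: p_mod_def)

text \<open>The pieces meet at \<open>X\<close> (where both equal \<open>p X \<ge> 0\<close>), so the modified demand is continuous.\<close>

lemma p_mod_continuous:
  assumes "0 \<le> p X"
  shows "continuous_on UNIV (p_mod p X XS)"
proof -
  define sl where "sl = (p XS - p X) / (XS - X)"
  have eq: "p_mod p X XS = (\<lambda>q. if (\<lambda>q. q) q \<le> X then p X - \<bar>deriv p X\<bar> * (q - X)
      else max 0 (sl * (q - X) + p X))"
    by (rule ext) (simp add: p_mod_def sl_def)
  show ?thesis unfolding eq
    by (rule continuous_on_cases_le) (use assms in \<open>auto intro!: continuous_intros\<close>)
qed

text \<open>Left of \<open>X\<close> the modified demand is the tangent of the convex demand, hence below it.\<close>

lemma p_mod_le_below:
  assumes cvx: "convex_on {0..} p" and X: "0 < X"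
    and der: "(p has_real_derivative d) (at X)" and d: "d \<le> 0"
    and q: "0 \<le> q" "q \<le> X"
  shows "p_mod p X XS q \<le> p q"
proof -
  have "d * (q - X) \<le> p q - p X"
    by (rule convex_on_imp_above_tangent[OF cvx])
      (use X q der in \<open>auto simp: is_interval_connected intro: has_field_derivative_at_within\<close>)
  then show ?thesis using q d DERIV_imp_deriv[OF der] by (simp add: p_mod_left)
qed

text \<open>Between \<open>X\<close> and \<open>XS\<close> it is the chord of the convex demand, hence above it.\<close>

lemma p_mod_ge_between:
  assumes cvx: "convex_on {0..} p" and q: "0 \<le> X" "X \<le> q" "q \<le> XS"
  shows "p q \<le> p_mod p X XS q"
proof (cases "q = X")
  case False
  have "convex_on {X..XS} p" by (rule convex_on_subset[OF cvx]) (use q in auto)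
  from convex_onD_Icc'[OF this, of q] q False show ?thesis by (simp add: p_mod_right)
qed (simp add: p_mod_left)

lemma p_mod_ge_optimal_price:
  assumes XXS: "X < XS" and prices: "p XS \<le> p X" and q: "q \<le> XS"
  shows "p XS \<le> p_mod p X XS q"
proof (cases "q \<le> X")
  case True
  then show ?thesis
    using prices mult_nonneg_nonpos[of "\<bar>deriv p X\<bar>" "q - X"] by (simp add: p_mod_left)
next
  case False
  have "(p XS - p X) / (XS - X) * (XS - X) \<le> (p XS - p X) / (XS - X) * (q - X)"
    using XXS prices q by (intro mult_left_mono_neg) (auto simp: divide_nonpos_pos)
  then show ?thesis using False XXS by (simp add: p_mod_right)
qed

lemma p_mod_le_optimal_price:
  assumes XXS: "X < XS" and prices: "p XS \<le> p X" "0 \<le> p XS" and q: "XS \<le> q"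
  shows "p_mod p X XS q \<le> p XS"
proof -
  have "(p XS - p X) / (XS - X) * (q - X) \<le> (p XS - p X) / (XS - X) * (XS - X)"
    using XXS prices q by (intro mult_left_mono_neg) (auto simp: divide_nonpos_pos)
  then show ?thesis using XXS q prices by (simp add: p_mod_right)
qed

lemma ratio_decrease:
  fixes a b w ws :: real
  assumes "0 \<le> a" "0 \<le> b" "0 \<le> w" "w \<le> ws" "0 \<le> ws - a + b"
  shows "(w - a) / (ws - a + b) \<le> w / ws"
proof (cases "ws = 0 \<or> ws - a + b = 0")
  case True
  then show ?thesis using assms by (auto simp: divide_nonpos_nonneg)
next
  case False
  then have pos: "0 < ws" "0 < ws - a + b" using assms by auto
  have "a * w \<le> a * ws" and "0 \<le> b * w" using assms by (simp_all add: mult_left_mono)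
  then have "(w - a) * ws \<le> w * (ws - a + b)" by (simp add: algebra_simps)
  then show ?thesis using pos by (simp add: divide_simps)
qed

lemma efficiency_le_of_demand_change:
  fixes p p0 :: "real \<Rightarrow> real"
  assumes C0: "\<And>n. n < N \<Longrightarrow> C n 0 = 0"
    and opt: "social_optimum N C p xS" and opt0: "social_optimum N C p0 xS"
    and x: "nonneg_vec N x" and Wx: "0 \<le> welfare N C p x"
    and XXS: "total N x \<le> total N xS"
    and pc: "continuous_on {0..} p" and p0c: "continuous_on {0..} p0"
    and below: "\<And>q. 0 \<le> q \<Longrightarrow> q \<le> total N x \<Longrightarrow> p0 q \<le> p q"
    and between: "\<And>q. total N x \<le> q \<Longrightarrow> q \<le> total N xS \<Longrightarrow> p q \<le> p0 q"
  shows "efficiency N C p0 x \<le> efficiency N C p x"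
proof -
  define X XS where "X = total N x" and "XS = total N xS"
  have X: "0 \<le> X" using total_nonneg[OF x] unfolding X_def .
  note int = integrable_on_nonneg_interval[OF pc] integrable_on_nonneg_interval[OF p0c]
  define A where "A = integral {0..X} p - integral {0..X} p0"
  define B where "B = integral {X..XS} p0 - integral {X..XS} p"
  have A: "0 \<le> A"
    using integral_le[of p0 "{0..X}" p] int below unfolding A_def X_def by auto
  have B: "0 \<le> B"
    using integral_le[of p "{X..XS}" p0] int between X unfolding B_def X_def XS_def by auto
  have combine: "integral {0..X} f + integral {X..XS} f = integral {0..XS} f"
    if "continuous_on {0..} f" for f :: "real \<Rightarrow> real"
    using X XXS integrable_on_nonneg_interval[OF that]
    by (intro Henstock_Kurzweil_Integration.integral_combine) (auto simp: X_def XS_def)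
  have Wx0: "welfare N C p0 x = welfare N C p x - A"
    unfolding welfare_def A_def X_def by simp
  have WxS0: "welfare N C p0 xS = welfare N C p xS - A + B"
    using combine[OF pc] combine[OF p0c] unfolding welfare_def A_def B_def XS_def by simp
  have "0 \<le> welfare N C p0 xS"
    using opt0 welfare_zero_vec[of N C p0] C0 unfolding social_optimum_def nonneg_vec_def by force
  moreover have "welfare N C p x \<le> welfare N C p xS" using opt x unfolding social_optimum_def by simp
  ultimately show ?thesis
    unfolding efficiency_def social_optimum_opt_welfare[OF opt] social_optimum_opt_welfare[OF opt0]
      Wx0 WxS0 using ratio_decrease[OF A B Wx] by simp
qed

theorem proposition9:
  fixes N :: nat and C :: "nat \<Rightarrow> real \<Rightarrow> real" and p :: "real \<Rightarrow> real"
    and x xS :: "nat \<Rightarrow> real"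
  assumes "0 < N"
    and "assm1 N C" and "assm2 p" and "assm3 N C p" and "assm4 N C p"
    and "convex_on {0..} p"
    and "cournot_candidate N C p x"
    and "social_optimum N C p xS"
    and "p (total N x) \<noteq> p (total N xS)"
  shows "social_optimum N C (p_mod p (total N x) (total N xS)) xS \<and>
         efficiency N C (p_mod p (total N x) (total N xS)) x \<le> efficiency N C p x"
proof -
  define X XS where "X = total N x" and "XS = total N xS"
  have pc: "continuous_on {0..} p" and pnn: "\<And>q. 0 \<le> q \<Longrightarrow> 0 \<le> p q"
    and antimono: "\<And>q r. 0 \<le> q \<Longrightarrow> q \<le> r \<Longrightarrow> p r \<le> p q"
    using assms(3) unfolding assm2_def by auto
  have x: "nonneg_vec N x" using assms(7) unfolding cournot_candidate_def by simp
  have xS: "nonneg_vec N xS" using assms(8) unfolding social_optimum_def by simp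
  have X: "0 < X" using cournot_total_pos[OF assms(1,5,7)] unfolding X_def .
  have der: "(p has_real_derivative lderiv p X) (at X)"
    using cournot_demand_differentiable[OF assms(3,6,7)] X unfolding X_def by simp
  have slope: "lderiv p X \<le> 0" using derivative_nonpos_if_antimono[OF der] X antimono by simp
  have XXS: "X < XS"
    using cournot_total_lt_optimum[OF assms(2,3,7,8) _ assms(9)] slope unfolding X_def XS_def by simp
  have prices: "p XS \<le> p X" "0 \<le> p XS" using X XXS antimono pnn by auto
  have p0c: "continuous_on {0..} (p_mod p X XS)"
    using p_mod_continuous[of p X XS] pnn X continuous_on_subset by fastforce
  have opt0: "social_optimum N C (p_mod p X XS) xS"
    using supporting_price_imp_social_optimum[OF xS _ p0c, of "p XS"]
      social_optimum_supporting_price[OF assms(2) pc assms(8)]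
      p_mod_ge_optimal_price[OF XXS prices(1)] p_mod_le_optimal_price[OF XXS prices]
    unfolding XS_def by blast
  have "efficiency N C (p_mod p X XS) x \<le> efficiency N C p x"
    using efficiency_le_of_demand_change[OF _ assms(8) opt0 x _ _ pc p0c]
      p_mod_le_below[OF assms(6) X der slope] p_mod_ge_between[OF assms(6)]
      cournot_welfare_nonneg[OF assms(2,3,7)] slope XXS X assms(2)
    unfolding X_def XS_def assm1_def by simp
  with opt0 show ?thesis unfolding X_def XS_def by simp
qed

end
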